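(* Let $n,k$ be integers with $n\ge 97$ and $\frac{3n}{4}\le k\le n$. Then $$\overline{\mathrm{dist}}_F(\mathcal{S}^{n,k},\mathcal{S}^n_+)\le 96\left(\frac{n-k}{n}\right)^{3/2}.$$
   Context: $\mathcal{S}^n_+$ denotes the cone of $n\times n$ real symmetric positive semidefinite (PSD) matrices. For integers $2\le k\le n$, the $k$-PSD closure $\mathcal{S}^{n,k}$ is the set of all $n\times n$ real symmetric matrices all of whose $k\times k$ principal submatrices are PSD. For a matrix $M$, $\mathrm{dist}_F(M,\mathcal{S}^n_+)=\inf_{N\in\mathcal{S}^n_+}\|M-N\|_F$, where $\|\cdot\|_F$ is the Frobenius norm. For a set $\mathcal{K}$ of $n\times n$ matrices, $\overline{\mathrm{dist}}_F(\mathcal{K},\mathcal{S}^n_+)=\sup_{M\in\mathcal{K},\ \|M\|_F=1}\mathrm{dist}_F(M,\mathcal{S}^n_+)$. *)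

theory Defs
  imports "HOL-Analysis.Analysis"
begin

text \<open>Real n x n matrices are represented as real^'n^'n, with n = CARD('n).\<close>

definition symmetric_mat :: "real^'n^'n \<Rightarrow> bool" where
  "symmetric_mat M \<longleftrightarrow> transpose M = M"

definition psd_cone :: "(real^'n^'n) set" where
  "psd_cone = {M. symmetric_mat M \<and> (\<forall>x::real^'n. 0 \<le> x \<bullet> (M *v x))}"

definition principal_psd :: "real^'n^'n \<Rightarrow> 'n set \<Rightarrow> bool" where
  "principal_psd M I \<longleftrightarrow>
     (\<forall>x::'n \<Rightarrow> real. 0 \<le> (\<Sum>i\<in>I. \<Sum>j\<in>I. x i * M $ i $ j * x j))"

definition k_psd_closure :: "nat \<Rightarrow> (real^'n^'n) set" where
  "k_psd_closure k = {M. symmetric_mat M \<and>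
      (\<forall>I::'n set. card I = k \<longrightarrow> principal_psd M I)}"

definition frob_norm :: "real^'n^'n \<Rightarrow> real" where
  "frob_norm M = sqrt (\<Sum>i\<in>UNIV. \<Sum>j\<in>UNIV. (M $ i $ j)\<^sup>2)"

definition dist_F_psd :: "real^'n^'n \<Rightarrow> real" where
  "dist_F_psd M = (INF N\<in>psd_cone. frob_norm (M - N))"

definition dist_F_bar :: "(real^'n^'n) set \<Rightarrow> real" where
  "dist_F_bar K = (SUP M\<in>{M\<in>K. frob_norm M = 1}. dist_F_psd M)"

end

theory Submission
  imports Defs
begin

text \<open>Write a unit-norm \<open>M\<close> in the \<open>k\<close>-PSD closure as \<open>M = P - Q\<close>, where \<open>P\<close> is the
  projection of \<open>M\<close> onto the PSD cone; then \<open>P\<close> and \<open>Q\<close> are PSD, \<open>P Q = 0\<close>, and \<open>M\<close> is at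
  distance \<open>\<parallel>Q\<parallel>\<close> from the cone. Let \<open>m = n - k\<close>. For every set \<open>T\<close> of \<open>m\<close> indices the block
  of \<open>M\<close> on the complement of \<open>T\<close> is PSD, and pairing it with \<open>Q\<close> bounds \<open>\<parallel>Q\<parallel>\<^sup>2\<close> by twice
  the squared norm of the rows of \<open>Q\<close> in \<open>T\<close> plus the sum of \<open>P\<^sub>i\<^sub>j Q\<^sub>i\<^sub>j\<close> over \<open>i, j \<in> T\<close>.
  The form of \<open>M\<close> is negative definite on the range of \<open>Q\<close>, which therefore meets the
  coordinate subspace supported off \<open>T\<close> only in \<open>0\<close>; hence \<open>rank Q \<le> m\<close> and
  \<open>tr Q \<le> sqrt m \<parallel>Q\<parallel>\<close>. Averaging the bound over the \<open>m\<close>-subsets of the set \<open>L\<close> of indices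
  with \<open>P\<^sub>i\<^sub>i \<le> 2 / sqrt n\<close>, which has at least \<open>3n/4\<close> elements because \<open>\<parallel>P\<parallel> \<le> 1\<close>, yields a
  quadratic inequality in \<open>\<parallel>Q\<parallel>\<close> whose solution is \<open>\<parallel>Q\<parallel> \<le> 96 (m/n)\<^sup>3\<^sup>/\<^sup>2\<close>.\<close>

section \<open>The cone of positive semidefinite matrices\<close>

lemma inner_matrix: "inner (A::real^'n^'n) B = (\<Sum>i\<in>UNIV. \<Sum>j\<in>UNIV. A$i$j * B$i$j)"
  by (simp add: inner_vec_def)

lemma norm_matrix_squared: "(norm (A::real^'n^'n))\<^sup>2 = (\<Sum>i\<in>UNIV. \<Sum>j\<in>UNIV. (A$i$j)\<^sup>2)"
  unfolding power2_norm_eq_inner by (simp add: inner_matrix power2_eq_square)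

lemma frob_norm_eq_norm: "frob_norm A = norm A"
  by (simp add: frob_norm_def norm_matrix_squared[symmetric])

definition outer_prod :: "real^'n \<Rightarrow> real^'n \<Rightarrow> real^'n^'n" where
  "outer_prod x y = (\<chi> i j. x$i * y$j)"

lemma inner_outer_prod: "inner A (outer_prod x y) = x \<bullet> (A *v y)"
  by (simp add: inner_matrix outer_prod_def inner_vec_def matrix_vector_mult_def
      sum_distrib_left mult_ac)

lemma outer_prod_mult_vec: "outer_prod x y *v z = (y \<bullet> z) *\<^sub>R x"
  by (simp add: outer_prod_def matrix_vector_mult_def inner_vec_def vec_eq_iff
      sum_distrib_left mult_ac)

lemma transpose_outer_prod: "transpose (outer_prod x y) = outer_prod y x"
  by (simp add: outer_prod_def transpose_def vec_eq_iff mult.commute)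

lemma inner_outer_prod_outer_prod: "inner (outer_prod x x) (outer_prod y y) = (x \<bullet> y)\<^sup>2"
  by (simp add: inner_outer_prod outer_prod_mult_vec inner_commute power2_eq_square)

lemma norm_outer_prod_self: "norm (outer_prod x x) = (norm x)\<^sup>2"
proof -
  have "(norm (outer_prod x x))\<^sup>2 = ((norm x)\<^sup>2)\<^sup>2"
    by (simp add: power2_norm_eq_inner inner_outer_prod_outer_prod)
  then show ?thesis
    by (rule power2_eq_imp_eq) simp_all
qed

lemma psd_coneI: "transpose M = M \<Longrightarrow> (\<And>x. 0 \<le> x \<bullet> (M *v x)) \<Longrightarrow> M \<in> psd_cone"
  by (simp add: psd_cone_def symmetric_mat_def)

lemma psd_cone_transpose: "M \<in> psd_cone \<Longrightarrow> transpose M = M"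
  by (simp add: psd_cone_def symmetric_mat_def)

lemma psd_cone_nonneg: "M \<in> psd_cone \<Longrightarrow> 0 \<le> x \<bullet> (M *v x)"
  by (simp add: psd_cone_def)

lemma psd_cone_entry_sym: "M \<in> psd_cone \<Longrightarrow> M$i$j = M$j$i"
  by (metis psd_cone_transpose transpose_def vec_lambda_beta)

lemma psd_cone_diag_nonneg: "M \<in> psd_cone \<Longrightarrow> 0 \<le> M$i$i"
  using psd_cone_nonneg[of M "axis i 1"]
  by (simp add: matrix_vector_mult_basis column_def inner_commute[of "axis i 1"] inner_axis)

lemma outer_prod_in_psd_cone: "outer_prod x x \<in> psd_cone"
  by (rule psd_coneI) (simp_all add: transpose_outer_prod outer_prod_mult_vec inner_commute)

lemma psd_cone_scaleR: "M \<in> psd_cone \<Longrightarrow> 0 \<le> c \<Longrightarrow> c *\<^sub>R M \<in> psd_cone"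
  by (rule psd_coneI)
     (auto simp: transpose_scalar psd_cone_transpose scaleR_matrix_vector_assoc[symmetric]
        psd_cone_nonneg)

lemma zero_in_psd_cone: "0 \<in> psd_cone"
  using psd_cone_scaleR[OF outer_prod_in_psd_cone, of 0] by simp

lemma convex_psd_cone: "convex psd_cone"
  unfolding convex_def
  by (auto simp: psd_cone_def symmetric_mat_def transpose_scalar matrix_vector_mult_add_rdistrib
      scaleR_matrix_vector_assoc[symmetric] inner_add_right transpose_def vec_eq_iff
      intro!: add_nonneg_nonneg mult_nonneg_nonneg)

lemma psd_cone_eq: "psd_cone = {M. transpose M = M} \<inter> (\<Inter>x. {M. 0 \<le> inner M (outer_prod x x)})"
  by (auto simp: psd_cone_def symmetric_mat_def inner_outer_prod)

lemma closed_psd_cone: "closed psd_cone"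
proof -
  have "continuous_on UNIV (transpose :: real^'n^'n \<Rightarrow> _)"
    unfolding transpose_def by (intro continuous_intros)
  then show ?thesis
    unfolding psd_cone_eq
    by (intro closed_Int closed_INT ballI closed_Collect_eq closed_Collect_le continuous_intros)
       auto
qed

section \<open>Moreau decomposition\<close>

lemma inner_transpose_transpose: "inner (transpose A) (transpose B) = inner (A::real^'n^'n) B"
  unfolding inner_matrix transpose_def by (simp add: sum.swap[of "\<lambda>i j. A$j$i * B$j$i"])

lemma inner_transpose_mult_vec: "x \<bullet> (transpose C *v y) = (C *v x) \<bullet> (y::real^'m)"
  by (simp add: transpose_matrix_vector inner_commute[of x] dot_lmul_matrix inner_commute[of y])

lemma matrix_add_rdistrib: "(A + B) ** C = A ** C + B ** (C::real^'n^'n)"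
  by (simp add: matrix_matrix_mult_def vec_eq_iff sum.distrib algebra_simps)

lemma psd_cone_congruence:
  assumes "A \<in> psd_cone"
  shows "transpose C ** A ** C \<in> psd_cone"
proof (rule psd_coneI)
  show "transpose (transpose C ** A ** C) = transpose C ** A ** C"
    by (simp add: matrix_transpose_mul psd_cone_transpose[OF assms] matrix_mul_assoc)
  show "0 \<le> x \<bullet> ((transpose C ** A ** C) *v x)" for x
    using psd_cone_nonneg[OF assms, of "C *v x"]
    by (metis matrix_vector_mul_assoc inner_transpose_mult_vec)
qed

lemma linear_coeff_zero_if_quadratic_nonneg:
  fixes b c :: real
  assumes "\<And>t. 0 \<le> b * t + c * t\<^sup>2"
  shows "b = 0"
proof (rule ccontr)
  assume "b \<noteq> 0"
  define D where "D = \<bar>c\<bar> + 1"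
  have "D > 0" "c < D" by (auto simp: D_def)
  have "b * (- b / D) + c * (- b / D)\<^sup>2 = (b\<^sup>2 / D\<^sup>2) * (c - D)"
    using \<open>D > 0\<close> by (simp add: field_simps power2_eq_square)
  also have "\<dots> < 0"
    using \<open>b \<noteq> 0\<close> \<open>D > 0\<close> \<open>c < D\<close> by (intro mult_pos_neg) auto
  finally show False using assms[of "- b / D"] by simp
qed

lemma psd_cone_kernel:
  assumes P: "P \<in> psd_cone" and "y \<bullet> (P *v y) = 0"
  shows "P *v y = 0"
proof -
  let ?z = "P *v y"
  have "y \<bullet> (P *v ?z) = ?z \<bullet> ?z"
    using inner_transpose_mult_vec[of y P ?z] by (simp add: psd_cone_transpose[OF P])
  then have "(y + t *\<^sub>R ?z) \<bullet> (P *v (y + t *\<^sub>R ?z))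
      = (2 * (?z \<bullet> ?z)) * t + (?z \<bullet> (P *v ?z)) * t\<^sup>2" for t
    using assms(2)
    by (simp add: matrix_vector_right_distrib matrix_vector_mult_scaleR inner_add_left
        inner_add_right inner_commute[of ?z y] power2_eq_square algebra_simps)
  then have "2 * (?z \<bullet> ?z) = 0"
    using psd_cone_nonneg[OF P] linear_coeff_zero_if_quadratic_nonneg by metis
  then show ?thesis by simp
qed

lemma psd_cone_mult_zero_if_inner_zero:
  fixes P Q :: "real^'n^'n"
  assumes P: "P \<in> psd_cone" and "inner Q (P ** Q) = 0"
  shows "P ** Q = 0"
proof -
  have "(\<Sum>l\<in>UNIV. column l Q \<bullet> (P *v column l Q))
      = (\<Sum>j\<in>UNIV. \<Sum>i\<in>UNIV. Q$i$j * (\<Sum>k\<in>UNIV. P$i$k * Q$k$j))"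
    by (simp add: column_def inner_vec_def matrix_vector_mult_def)
  also have "\<dots> = (\<Sum>i\<in>UNIV. \<Sum>j\<in>UNIV. Q$i$j * (\<Sum>k\<in>UNIV. P$i$k * Q$k$j))"
    by (rule sum.swap)
  also have "\<dots> = inner Q (P ** Q)"
    by (simp add: inner_matrix matrix_matrix_mult_def)
  finally have "column l Q \<bullet> (P *v column l Q) = 0" for l
    using assms(2) sum_nonneg_eq_0_iff[of UNIV "\<lambda>l. column l Q \<bullet> (P *v column l Q)"]
      psd_cone_nonneg[OF P] by auto
  then have "P *v column l Q = 0" for l
    by (rule psd_cone_kernel[OF P])
  then show ?thesis
    by (simp add: vec_eq_iff matrix_matrix_mult_def matrix_vector_mult_def column_def)
qed

text \<open>The perturbations \<open>(I + tQ) P (I + tQ)\<close> stay in the cone, so the derivative at \<open>t = 0\<close> of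
  \<open>\<langle>Q, (I + tQ) P (I + tQ)\<rangle> \<ge> 0\<close> vanishes, which gives \<open>\<langle>Q, P Q\<rangle> = 0\<close>.\<close>
lemma psd_cone_dual_orthogonal_imp_mult_zero:
  fixes P Q :: "real^'n^'n"
  assumes P: "P \<in> psd_cone" and Q: "Q \<in> psd_cone"
    and dual: "\<And>X. X \<in> psd_cone \<Longrightarrow> 0 \<le> inner Q X" and orth: "inner Q P = 0"
  shows "P ** Q = 0"
proof (rule psd_cone_mult_zero_if_inner_zero[OF P])
  have sP: "transpose P = P" and sQ: "transpose Q = Q"
    using P Q psd_cone_transpose by auto
  then have "Q$j$i = Q$i$j" for i j
    by (simp add: vec_eq_iff transpose_def)
  then have "transpose (mat 1 + t *\<^sub>R Q) = mat 1 + t *\<^sub>R Q" for t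
    by (simp add: transpose_def vec_eq_iff mat_def)
  moreover have "(mat 1 + t *\<^sub>R Q) ** P ** (mat 1 + t *\<^sub>R Q)
      = P + t *\<^sub>R (Q ** P) + t *\<^sub>R (P ** Q) + t\<^sup>2 *\<^sub>R (Q ** P ** Q)" for t
    by (simp add: matrix_add_ldistrib matrix_add_rdistrib matrix_scalar_ac
        scalar_matrix_assoc[symmetric] matrix_mul_assoc scaleR_add_right power2_eq_square)
  moreover have "inner Q (Q ** P) = inner Q (P ** Q)"
    using inner_transpose_transpose[of Q "P ** Q"] by (simp add: matrix_transpose_mul sP sQ)
  ultimately have "inner Q (transpose (mat 1 + t *\<^sub>R Q) ** P ** (mat 1 + t *\<^sub>R Q))
      = (2 * inner Q (P ** Q)) * t + inner Q (Q ** P ** Q) * t\<^sup>2" for t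
    by (simp add: inner_add_right orth algebra_simps)
  then show "inner Q (P ** Q) = 0"
    using dual[OF psd_cone_congruence[OF P]] linear_coeff_zero_if_quadratic_nonneg
    by (metis mult_eq_0_iff zero_neq_numeral)
qed

locale moreau_split =
  fixes M P Q :: "real^'n^'n"
  assumes symmetric: "transpose M = M"
    and P_psd: "P \<in> psd_cone"
    and split: "M = P - Q"
    and Q_dual: "\<And>X. X \<in> psd_cone \<Longrightarrow> 0 \<le> inner Q X"
    and orthogonal: "inner Q P = 0"

begin

lemma Q_psd: "Q \<in> psd_cone"
proof (rule psd_coneI)
  show "transpose Q = Q"
    using symmetric psd_cone_transpose[OF P_psd] by (simp add: split transpose_def vec_eq_iff)
  show "0 \<le> x \<bullet> (Q *v x)" for x
    using Q_dual[OF outer_prod_in_psd_cone] by (simp add: inner_outer_prod)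
qed

lemma mult_zero: "P ** Q = 0"
  by (rule psd_cone_dual_orthogonal_imp_mult_zero[OF P_psd Q_psd Q_dual orthogonal])

lemma norm_squared: "(norm M)\<^sup>2 = (norm P)\<^sup>2 + (norm Q)\<^sup>2"
  by (simp add: split power2_norm_eq_inner inner_diff_left inner_diff_right inner_commute[of P Q]
      orthogonal)

lemma norm_P_le: "norm P \<le> norm M"
  using norm_squared by (simp add: power2_le_imp_le)

lemma row_orthogonal: "(\<Sum>j\<in>UNIV. P$i$j * Q$i$j) = 0"
proof -
  have "Q$i$j = Q$j$i" for j
    using psd_cone_transpose[OF Q_psd] by (simp add: transpose_def vec_eq_iff)
  then show ?thesis
    using arg_cong[OF mult_zero, of "\<lambda>A. A$i$i"] by (simp add: matrix_matrix_mult_def)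
qed

end

lemma moreau_split_exists:
  fixes M :: "real^'n^'n"
  assumes "transpose M = M"
  obtains P Q where "moreau_split M P Q" and "dist_F_psd M \<le> norm Q"
proof -
  have ne: "psd_cone \<noteq> ({} :: (real^'n^'n) set)" using zero_in_psd_cone by auto
  define P where "P = closest_point psd_cone M"
  have P: "P \<in> psd_cone"
    unfolding P_def by (rule closest_point_in_set[OF closed_psd_cone ne])
  have "\<forall>y\<in>psd_cone. dist M P \<le> dist M y"
    unfolding P_def by (rule closest_point_exists(2)[OF closed_psd_cone ne])
  then have vi: "inner (M - P) (X - P) \<le> 0" if "X \<in> psd_cone" for X
    by (rule any_closest_point_dot[OF convex_psd_cone closed_psd_cone P that])
  have "0 \<le> inner (M - P) P"
    using vi[OF zero_in_psd_cone] by simp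
  moreover have "inner (M - P) P \<le> 0"
    using vi[OF psd_cone_scaleR[OF P, of 2]] by (simp add: scaleR_2)
  ultimately have "inner (M - P) P = 0"
    by linarith
  then have orth: "inner (P - M) P = 0"
    by (metis inner_minus_left minus_diff_eq neg_equal_0_iff_equal)
  have "moreau_split M P (P - M)"
  proof
    show "0 \<le> inner (P - M) X" if "X \<in> psd_cone" for X
      using vi[OF that] orth by (simp add: inner_diff_left inner_diff_right algebra_simps)
  qed (use assms P orth in auto)
  moreover have "dist_F_psd M \<le> norm (P - M)"
    unfolding dist_F_psd_def frob_norm_eq_norm
    by (rule cINF_lower2[OF _ P]) (auto simp: norm_minus_commute bdd_below_def intro!: exI[of _ 0])
  ultimately show ?thesis using that by blast
qed

section \<open>Principal submatrices\<close>

definition principal_block :: "'n set \<Rightarrow> real^'n^'n \<Rightarrow> real^'n^'n" where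
  "principal_block I A = (\<chi> i j. if i \<in> I \<and> j \<in> I then A$i$j else 0)"

lemma sum_sum_restrict:
  fixes f :: "'n::finite \<Rightarrow> 'n \<Rightarrow> real"
  shows "(\<Sum>i\<in>UNIV. \<Sum>j\<in>UNIV. if i \<in> I \<and> j \<in> I then f i j else 0) = (\<Sum>i\<in>I. \<Sum>j\<in>I. f i j)"
proof -
  have "(\<Sum>j\<in>UNIV. if i \<in> I \<and> j \<in> I then f i j else 0) = (if i \<in> I then \<Sum>j\<in>I. f i j else 0)" for i
    by (cases "i \<in> I") (simp_all add: sum.inter_restrict[symmetric])
  then show ?thesis
    by (simp add: sum.inter_restrict[symmetric])
qed

lemma inner_principal_block: "inner (principal_block I A) B = (\<Sum>i\<in>I. \<Sum>j\<in>I. A$i$j * B$i$j)"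
proof -
  have "principal_block I A $ i $ j * B$i$j = (if i \<in> I \<and> j \<in> I then A$i$j * B$i$j else 0)" for i j
    by (simp add: principal_block_def)
  then show ?thesis
    unfolding inner_matrix by (simp add: sum_sum_restrict)
qed

lemma inner_principal_block_right: "inner A (principal_block I B) = inner (principal_block I A) B"
  by (simp add: inner_commute[of A] inner_principal_block mult.commute)

lemma principal_block_outer_prod:
  "principal_block I (outer_prod x x)
    = outer_prod (\<chi> i. if i \<in> I then x$i else 0) (\<chi> i. if i \<in> I then x$i else 0)"
  by (simp add: principal_block_def outer_prod_def vec_eq_iff)

lemma principal_psd_iff:
  "principal_psd M I \<longleftrightarrow> (\<forall>x. 0 \<le> inner (principal_block I M) (outer_prod x x))"
proof -
  have "inner (principal_block I M) (outer_prod (vec_lambda x) (vec_lambda x))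
      = (\<Sum>i\<in>I. \<Sum>j\<in>I. x i * M$i$j * x j)" for x
    by (simp add: inner_principal_block outer_prod_def mult_ac)
  then show ?thesis
    unfolding principal_psd_def by (metis vec_lambda_eta)
qed

lemma principal_block_in_psd_cone:
  assumes "transpose M = M" and "principal_psd M I"
  shows "principal_block I M \<in> psd_cone"
proof (rule psd_coneI)
  show "transpose (principal_block I M) = principal_block I M"
    using assms(1) by (simp add: principal_block_def transpose_def vec_eq_iff conj_commute)
  show "0 \<le> x \<bullet> (principal_block I M *v x)" for x
    using assms(2) by (simp add: principal_psd_iff inner_outer_prod)
qed

lemma psd_cone_imp_principal_psd:
  fixes M :: "real^'n^'n"
  assumes "M \<in> psd_cone"
  shows "principal_psd M I"
  unfolding principal_psd_iff
proof
  fix x :: "real^'n"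
  let ?y = "\<chi> i. if i \<in> I then x$i else 0"
  have "inner (principal_block I M) (outer_prod x x) = inner M (outer_prod ?y ?y)"
    unfolding inner_principal_block_right[symmetric] principal_block_outer_prod ..
  also have "\<dots> = ?y \<bullet> (M *v ?y)"
    by (rule inner_outer_prod)
  finally show "0 \<le> inner (principal_block I M) (outer_prod x x)"
    using psd_cone_nonneg[OF assms] by simp
qed

lemma psd_cone_subset_k_psd_closure: "psd_cone \<subseteq> k_psd_closure k"
  by (auto simp: k_psd_closure_def psd_cone_imp_principal_psd) (simp add: psd_cone_def)

lemma principal_psd_quadratic_nonneg:
  assumes "principal_psd M I" and "\<And>i. i \<notin> I \<Longrightarrow> x$i = 0"
  shows "0 \<le> x \<bullet> (M *v x)"
proof -
  have "principal_block I (outer_prod x x) = outer_prod x x"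
    using assms(2) by (auto simp: principal_block_def outer_prod_def vec_eq_iff)
  then have "x \<bullet> (M *v x) = inner (principal_block I M) (outer_prod x x)"
    by (metis inner_outer_prod inner_principal_block_right)
  then show ?thesis
    using assms(1) by (simp add: principal_psd_iff)
qed

lemma norm_principal_block_le: "norm (principal_block I A) \<le> norm A"
proof -
  have "(norm (principal_block I A))\<^sup>2 \<le> (norm A)\<^sup>2"
    unfolding norm_matrix_squared principal_block_def by (intro sum_mono) auto
  then show ?thesis
    by (rule power2_le_imp_le) simp
qed

lemma sum_block_le_norm_mult_norm: "(\<Sum>i\<in>I. \<Sum>j\<in>I. A$i$j * B$i$j) \<le> norm A * norm (B::real^'n^'n)"
proof -
  have "(\<Sum>i\<in>I. \<Sum>j\<in>I. A$i$j * B$i$j) \<le> norm (principal_block I A) * norm B"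
    unfolding inner_principal_block[symmetric] by (rule norm_cauchy_schwarz)
  also have "\<dots> \<le> norm A * norm B"
    by (intro mult_right_mono norm_principal_block_le) simp
  finally show ?thesis .
qed

lemma sum_Compl: "sum g (- T) = sum g UNIV - sum (g :: 'n::finite \<Rightarrow> real) T"
  using sum.subset_diff[of T UNIV g] by (simp add: Compl_eq_Diff_UNIV)

lemma card_Compl: "card (- (A :: 'a::finite set)) = CARD('a) - card A"
  using card_Diff_subset[of A UNIV] by (simp add: Compl_eq_Diff_UNIV)

lemma sum_sum_Compl_eq:
  fixes F :: "'n::finite \<Rightarrow> 'n \<Rightarrow> real"
  assumes rows: "\<And>i. (\<Sum>j\<in>UNIV. F i j) = 0" and cols: "\<And>j. (\<Sum>i\<in>UNIV. F i j) = 0"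
  shows "(\<Sum>i\<in>-T. \<Sum>j\<in>-T. F i j) = (\<Sum>i\<in>T. \<Sum>j\<in>T. F i j)"
proof -
  have "(\<Sum>i\<in>-T. \<Sum>j\<in>-T. F i j) = - (\<Sum>i\<in>-T. \<Sum>j\<in>T. F i j)"
    by (simp add: sum_Compl[of "F _"] rows sum_negf)
  also have "\<dots> = - (\<Sum>j\<in>T. \<Sum>i\<in>-T. F i j)"
    by (subst sum.swap) simp
  also have "\<dots> = (\<Sum>j\<in>T. \<Sum>i\<in>T. F i j)"
    by (simp add: sum_Compl[of "\<lambda>i. F i _"] cols sum_negf)
  also have "\<dots> = (\<Sum>i\<in>T. \<Sum>j\<in>T. F i j)"
    by (rule sum.swap)
  finally show ?thesis .
qed

lemma sum_sum_le_Compl_block: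
  fixes G :: "'n::finite \<Rightarrow> 'n \<Rightarrow> real"
  assumes sym: "\<And>i j. G i j = G j i" and nonneg: "\<And>i j. 0 \<le> G i j"
  shows "(\<Sum>i\<in>UNIV. \<Sum>j\<in>UNIV. G i j) \<le> (\<Sum>i\<in>-T. \<Sum>j\<in>-T. G i j) + 2 * (\<Sum>i\<in>T. \<Sum>j\<in>UNIV. G i j)"
proof -
  have "(\<Sum>i\<in>-T. \<Sum>j\<in>T. G i j) \<le> (\<Sum>i\<in>UNIV. \<Sum>j\<in>T. G i j)"
    by (rule sum_mono2) (auto intro: sum_nonneg nonneg)
  also have "\<dots> = (\<Sum>i\<in>T. \<Sum>j\<in>UNIV. G i j)"
    by (subst sum.swap) (simp add: sym)
  finally have "(\<Sum>i\<in>-T. \<Sum>j\<in>T. G i j) \<le> (\<Sum>i\<in>T. \<Sum>j\<in>UNIV. G i j)" .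
  moreover have "sum (G i) UNIV = sum (G i) (-T) + sum (G i) T" for i
    by (simp add: sum_Compl)
  then have "(\<Sum>i\<in>-T. \<Sum>j\<in>UNIV. G i j) = (\<Sum>i\<in>-T. \<Sum>j\<in>-T. G i j) + (\<Sum>i\<in>-T. \<Sum>j\<in>T. G i j)"
    by (simp add: sum.distrib)
  moreover have "(\<Sum>i\<in>UNIV. \<Sum>j\<in>UNIV. G i j) = (\<Sum>i\<in>-T. \<Sum>j\<in>UNIV. G i j) + (\<Sum>i\<in>T. \<Sum>j\<in>UNIV. G i j)"
    by (simp add: sum_Compl)
  ultimately show ?thesis
    by linarith
qed

context moreau_split
begin

lemma norm_Q_squared_le:
  assumes "principal_psd M (-T)"
  shows "(norm Q)\<^sup>2 \<le> 2 * (\<Sum>i\<in>T. \<Sum>j\<in>UNIV. (Q$i$j)\<^sup>2) + (\<Sum>i\<in>T. \<Sum>j\<in>T. P$i$j * Q$i$j)"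
proof -
  have Psym: "P$i$j = P$j$i" and Qsym: "Q$i$j = Q$j$i" for i j
    using psd_cone_entry_sym P_psd Q_psd by blast+
  have "0 \<le> inner Q (principal_block (-T) M)"
    by (rule Q_dual[OF principal_block_in_psd_cone[OF symmetric assms]])
  also have "\<dots> = (\<Sum>i\<in>-T. \<Sum>j\<in>-T. P$i$j * Q$i$j - (Q$i$j)\<^sup>2)"
    unfolding inner_principal_block_right inner_principal_block
    by (simp add: split algebra_simps power2_eq_square)
  finally have "(\<Sum>i\<in>-T. \<Sum>j\<in>-T. (Q$i$j)\<^sup>2) \<le> (\<Sum>i\<in>-T. \<Sum>j\<in>-T. P$i$j * Q$i$j)"
    by (simp add: sum_subtractf)
  also have "\<dots> = (\<Sum>i\<in>T. \<Sum>j\<in>T. P$i$j * Q$i$j)"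
  proof (rule sum_sum_Compl_eq)
    show "(\<Sum>i\<in>UNIV. P$i$j * Q$i$j) = 0" for j
      using row_orthogonal[of j] by (simp add: Psym[of _ j] Qsym[of _ j])
  qed (rule row_orthogonal)
  finally have "(\<Sum>i\<in>-T. \<Sum>j\<in>-T. (Q$i$j)\<^sup>2) \<le> (\<Sum>i\<in>T. \<Sum>j\<in>T. P$i$j * Q$i$j)" .
  moreover have "(norm Q)\<^sup>2 \<le> (\<Sum>i\<in>-T. \<Sum>j\<in>-T. (Q$i$j)\<^sup>2) + 2 * (\<Sum>i\<in>T. \<Sum>j\<in>UNIV. (Q$i$j)\<^sup>2)"
    unfolding norm_matrix_squared by (rule sum_sum_le_Compl_block) (metis Qsym, simp)
  ultimately show ?thesis
    by linarith
qed

end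

section \<open>The rank of the negative part\<close>

lemma dim_le_card_if_negative_definite:
  fixes M :: "real^'n^'n"
  assumes V: "subspace V" and neg: "\<And>v. v \<in> V \<Longrightarrow> v \<noteq> 0 \<Longrightarrow> v \<bullet> (M *v v) < 0"
    and pp: "principal_psd M (-T)"
  shows "dim V \<le> card T"
proof -
  define W where "W = {x::real^'n. \<forall>i\<in>T. x$i = 0}"
  have W: "subspace W"
    unfolding W_def subspace_def by auto
  have "V \<inter> W \<subseteq> {0}"
    using neg principal_psd_quadratic_nonneg[OF pp] by (force simp: W_def)
  then have "dim (V \<inter> W) = 0"
    by (simp add: dim_eq_0)
  have "axis i 1 \<in> W" if "i \<in> -T" for i
    using that by (auto simp: W_def axis_def)
  then have "card ((\<lambda>i. axis i (1::real)) ` (-T)) \<le> dim W"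
    by (intro independent_card_le_dim independent_mono[OF independent_Basis])
       (auto simp: Basis_vec_def cart_basis_def)
  then have "CARD('n) - card T \<le> dim W"
    by (simp add: card_image inj_on_def axis_eq_axis card_Compl)
  moreover have "dim {x + y |x y. x \<in> V \<and> y \<in> W} \<le> CARD('n)"
    by (rule dim_subset_UNIV_cart)
  moreover have "card T \<le> CARD('n)"
    by (rule card_mono) auto
  ultimately show ?thesis
    using dim_sums_Int[OF V W] \<open>dim (V \<inter> W) = 0\<close> by linarith
qed

lemma trace_mult_eq_inner_transpose: "trace (A ** B) = inner (transpose A) (B::real^'n^'n)"
proof -
  have "trace (A ** B) = (\<Sum>i\<in>UNIV. \<Sum>k\<in>UNIV. A$i$k * B$k$i)"
    by (simp add: trace_def matrix_matrix_mult_def)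
  also have "\<dots> = (\<Sum>k\<in>UNIV. \<Sum>i\<in>UNIV. A$i$k * B$k$i)"
    by (rule sum.swap)
  finally show ?thesis
    by (simp add: inner_matrix transpose_def)
qed

lemma symmetric_kernel_if_orthogonal_range:
  assumes "transpose Q = Q" and "\<And>y. (Q *v y) \<bullet> z = 0"
  shows "Q *v z = (0::real^'n)"
proof -
  have "(Q *v z) \<bullet> (Q *v z) = z \<bullet> (Q *v (Q *v z))"
    using inner_transpose_mult_vec[of z Q "Q *v z"] assms(1) by simp
  also have "\<dots> = 0"
    using assms(2) by (simp add: inner_commute)
  finally show ?thesis by simp
qed

context
  fixes B :: "(real^'n) set"
  assumes finite: "finite B"
    and orthonormal: "\<And>b c. b \<in> B \<Longrightarrow> c \<in> B \<Longrightarrow> b \<bullet> c = (if b = c then 1 else 0)"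
begin

lemma inner_sum_outer_prod: "c \<in> B \<Longrightarrow> c \<bullet> ((\<Sum>b\<in>B. outer_prod b b) *v y) = c \<bullet> y"
proof -
  assume c: "c \<in> B"
  have "c \<bullet> ((\<Sum>b\<in>B. outer_prod b b) *v y) = (\<Sum>b\<in>B. inner (outer_prod b b) (outer_prod c y))"
    by (simp add: inner_outer_prod[symmetric] inner_sum_left)
  also have "\<dots> = (\<Sum>b\<in>B. (b \<bullet> y) * (c \<bullet> b))"
    by (simp add: inner_outer_prod outer_prod_mult_vec)
  also have "\<dots> = (\<Sum>b\<in>B. if b = c then c \<bullet> y else 0)"
    using c by (intro sum.cong refl) (auto simp: orthonormal)
  finally show ?thesis
    using c finite by simp
qed

lemma norm_sum_outer_prod: "norm (\<Sum>b\<in>B. outer_prod b b) = sqrt (card B)"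
proof -
  have "(norm (\<Sum>b\<in>B. outer_prod b b))\<^sup>2 = (\<Sum>b\<in>B. \<Sum>c\<in>B. (c \<bullet> b)\<^sup>2)"
    by (simp add: power2_norm_eq_inner inner_sum_left inner_sum_right inner_outer_prod_outer_prod)
  also have "\<dots> = (\<Sum>b\<in>B. \<Sum>c\<in>B. if b = c then 1 else 0)"
    by (intro sum.cong refl) (simp add: orthonormal)
  also have "\<dots> = card B"
    using finite by simp
  finally show ?thesis
    by (simp add: real_sqrt_unique)
qed

end

text \<open>\<open>Q\<close> is unchanged by the orthogonal projection \<open>\<Pi>\<close> onto its range, so
  \<open>tr Q = \<langle>Q, \<Pi>\<rangle> \<le> \<parallel>Q\<parallel> \<parallel>\<Pi>\<parallel>\<close> with \<open>\<parallel>\<Pi>\<parallel>\<^sup>2 = rank Q\<close>.\<close>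
lemma trace_le_sqrt_dim_range_mult_norm:
  fixes Q :: "real^'n^'n"
  assumes sym: "transpose Q = Q"
  shows "trace Q \<le> sqrt (dim (range ((*v) Q))) * norm Q"
proof -
  define V where "V = range ((*v) Q)"
  have "subspace V"
    unfolding V_def by (rule linear_subspace_image[OF matrix_vector_mul_linear subspace_UNIV])
  obtain B where "B \<subseteq> V" and orth: "pairwise orthogonal B" and unit: "\<And>x. x \<in> B \<Longrightarrow> norm x = 1"
    and "independent B" and card: "card B = dim V" and span: "span B = V"
    using orthonormal_basis_subspace[OF \<open>subspace V\<close>] by blast
  then have fin: "finite B"
    by (simp add: finiteI_independent)
  have on: "b \<bullet> c = (if b = c then 1 else 0)" if "b \<in> B" "c \<in> B" for b c
    using that orth unit by (auto simp: pairwise_def orthogonal_def dot_square_norm)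
  define Proj where "Proj = (\<Sum>b\<in>B. outer_prod b b)"
  have "Q *v (Proj *v y - y) = 0" for y
  proof (rule symmetric_kernel_if_orthogonal_range[OF sym])
    have "orthogonal (Proj *v y - y) c" if "c \<in> B" for c
      using inner_sum_outer_prod[OF fin on that]
      by (simp add: Proj_def orthogonal_def inner_diff_left inner_diff_right inner_commute)
    moreover have "Q *v x \<in> span B" for x
      using span by (simp add: V_def)
    ultimately have "orthogonal (Proj *v y - y) (Q *v x)" for x
      by (metis orthogonal_to_span)
    then show "(Q *v x) \<bullet> (Proj *v y - y) = 0" for x
      by (simp add: orthogonal_def inner_commute)
  qed
  then have "Q ** Proj = Q"
    by (simp add: matrix_eq matrix_vector_mul_assoc[symmetric] matrix_vector_mult_diff_distrib)
  then have "trace Q = inner Q Proj"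
    using trace_mult_eq_inner_transpose[of Q Proj] sym by simp
  also have "\<dots> \<le> norm Q * norm Proj"
    by (rule norm_cauchy_schwarz)
  also have "norm Proj = sqrt (dim V)"
    using norm_sum_outer_prod[OF fin on] card by (simp add: Proj_def)
  finally show ?thesis
    by (simp add: V_def mult.commute)
qed

context moreau_split
begin

lemma negative_definite_on_range:
  assumes "v \<in> range ((*v) Q)" and "v \<noteq> 0"
  shows "v \<bullet> (M *v v) < 0"
proof -
  obtain y where y: "v = Q *v y" using assms(1) by auto
  have "P *v v = 0"
    using mult_zero by (simp add: y matrix_vector_mul_assoc)
  then have Mv: "M *v v = - (Q *v v)"
    by (simp add: split matrix_vector_mult_diff_rdistrib)
  have "v \<bullet> (Q *v v) \<noteq> 0"
  proof
    assume "v \<bullet> (Q *v v) = 0"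
    then have "Q *v v = 0" by (rule psd_cone_kernel[OF Q_psd])
    then have "v \<bullet> v = 0"
      using inner_transpose_mult_vec[of y Q v] psd_cone_transpose[OF Q_psd] y
      by (simp add: inner_commute)
    then show False using assms(2) by simp
  qed
  then show ?thesis
    using psd_cone_nonneg[OF Q_psd, of v] by (simp add: Mv)
qed

lemma dim_range_Q_le:
  assumes "principal_psd M (-T)"
  shows "dim (range ((*v) Q)) \<le> card T"
  by (rule dim_le_card_if_negative_definite[OF _ negative_definite_on_range assms])
     (auto intro: linear_subspace_image[OF matrix_vector_mul_linear subspace_UNIV])

lemma trace_Q_le:
  assumes "principal_psd M (-T)"
  shows "trace Q \<le> sqrt (card T) * norm Q"
proof -
  have "trace Q \<le> sqrt (dim (range ((*v) Q))) * norm Q"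
    by (rule trace_le_sqrt_dim_range_mult_norm[OF psd_cone_transpose[OF Q_psd]])
  also have "\<dots> \<le> sqrt (card T) * norm Q"
    using dim_range_Q_le[OF assms] by (intro mult_right_mono) auto
  finally show ?thesis .
qed

end

section \<open>Averaging over subsets\<close>

lemma sum_sum_double_counting:
  assumes "finite F" "finite L" "\<And>T. T \<in> F \<Longrightarrow> h T \<subseteq> L"
  shows "(\<Sum>T\<in>F. \<Sum>p\<in>h T. f p) = (\<Sum>p\<in>L. f p * real (card {T\<in>F. p \<in> h T}))"
proof -
  have "(\<Sum>T\<in>F. \<Sum>p\<in>h T. f p) = (\<Sum>T\<in>F. \<Sum>p\<in>{p. p \<in> L \<and> p \<in> h T}. f p)"
    using assms(3) by (intro sum.cong refl) blast
  also have "\<dots> = (\<Sum>p\<in>L. \<Sum>T\<in>{T. T \<in> F \<and> p \<in> h T}. f p)"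
    by (rule sum.swap_restrict[OF assms(1,2)])
  finally show ?thesis
    by (simp add: mult.commute Collect_conj_eq)
qed

lemma card_subsets_containing:
  assumes "finite L" and "B \<subseteq> L" and "card B \<le> m"
  shows "card {T. T \<subseteq> L \<and> card T = m \<and> B \<subseteq> T} = (card L - card B) choose (m - card B)"
proof -
  have finB: "finite B" using assms(1,2) finite_subset by blast
  have "bij_betw (\<lambda>T. T - B) {T. T \<subseteq> L \<and> card T = m \<and> B \<subseteq> T} {U. U \<subseteq> L - B \<and> card U = m - card B}"
  proof (rule bij_betw_byWitness[where f' = "\<lambda>U. U \<union> B"])
    show "(\<lambda>U. U \<union> B) ` {U. U \<subseteq> L - B \<and> card U = m - card B} \<subseteq> {T. T \<subseteq> L \<and> card T = m \<and> B \<subseteq> T}"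
    proof clarify
      fix U assume U: "U \<subseteq> L - B" "card U = m - card B"
      have "card (U \<union> B) = card U + card B"
        using U assms(1) finB by (intro card_Un_disjoint) (auto dest: finite_subset)
      then show "U \<union> B \<subseteq> L \<and> card (U \<union> B) = m \<and> B \<subseteq> U \<union> B"
        using U assms(2,3) by auto
    qed
  qed (use finB in \<open>auto simp: card_Diff_subset\<close>)
  then have "card {T. T \<subseteq> L \<and> card T = m \<and> B \<subseteq> T} = card {U. U \<subseteq> L - B \<and> card U = m - card B}"
    by (rule bij_betw_same_card)
  also have "\<dots> = card (L - B) choose (m - card B)"
    using assms(1) by (intro n_subsets) auto
  finally show ?thesis
    using finB assms(2) by (simp add: card_Diff_subset)
qed

lemma card_subsets_containing_point:
  assumes "finite L" and "i \<in> L"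
  shows "real (card {T. T \<subseteq> L \<and> card T = m \<and> i \<in> T})
    = real m / real (card L) * real (card L choose m)"
proof (cases "m = 0")
  case True
  then have empty: "{T. T \<subseteq> L \<and> card T = m \<and> i \<in> T} = {}"
    using assms(1) by (auto dest: finite_subset)
  show ?thesis
    unfolding empty using True by simp
next
  case False
  have "card {T. T \<subseteq> L \<and> card T = m \<and> i \<in> T} = (card L - 1) choose (m - 1)"
    using card_subsets_containing[OF assms(1), of "{i}" m] assms(2) False by simp
  moreover have "m * (card L choose m) = card L * ((card L - 1) choose (m - 1))"
    using times_binomial_minus1_eq[of m "card L"] False by simp
  moreover have "card L > 0"
    using assms card_gt_0_iff by blast
  ultimately show ?thesis
    by (simp add: field_simps) (metis of_nat_mult)
qed

lemma card_subsets_containing_pair: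
  assumes "finite L" and "i \<in> L" "j \<in> L" "i \<noteq> j"
  shows "real (card {T. T \<subseteq> L \<and> card T = m \<and> i \<in> T \<and> j \<in> T})
    = real m * (real m - 1) / (real (card L) * (real (card L) - 1)) * real (card L choose m)"
proof (cases "m < 2")
  case True
  have empty: "{T. T \<subseteq> L \<and> card T = m \<and> i \<in> T \<and> j \<in> T} = {}"
  proof (rule ccontr)
    assume "{T. T \<subseteq> L \<and> card T = m \<and> i \<in> T \<and> j \<in> T} \<noteq> {}"
    then obtain T where T: "T \<subseteq> L" "card T = m" "i \<in> T" "j \<in> T" by auto
    have "card {i, j} \<le> card T"
      using T assms(1) by (intro card_mono) (auto dest: finite_subset)
    then show False using T True assms(4) by simp
  qed
  moreover have "real m * (real m - 1) = 0"
    using True by (cases m) auto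
  ultimately show ?thesis
    unfolding empty by simp
next
  case False
  define l where "l = card L"
  have "2 \<le> l"
    using assms card_mono[of L "{i, j}"] by (simp add: l_def)
  have "card {T. T \<subseteq> L \<and> card T = m \<and> i \<in> T \<and> j \<in> T} = (l - 1 - 1) choose (m - 1 - 1)"
    using card_subsets_containing[OF assms(1), of "{i, j}" m] assms False
    by (simp add: l_def numeral_2_eq_2)
  moreover have "m * (l choose m) = l * ((l - 1) choose (m - 1))"
    using times_binomial_minus1_eq[of m l] False by simp
  moreover have "(m - 1) * ((l - 1) choose (m - 1)) = (l - 1) * ((l - 1 - 1) choose (m - 1 - 1))"
    using times_binomial_minus1_eq[of "m - 1" "l - 1"] False by simp
  ultimately have count:
    "m * (m - 1) * (l choose m) = l * (l - 1) * card {T. T \<subseteq> L \<and> card T = m \<and> i \<in> T \<and> j \<in> T}"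
    by (metis mult.assoc mult.left_commute)
  have "real m * (real m - 1) * real (l choose m)
      = real l * (real l - 1) * real (card {T. T \<subseteq> L \<and> card T = m \<and> i \<in> T \<and> j \<in> T})"
    using arg_cong[OF count, of real] False \<open>2 \<le> l\<close> by (simp add: of_nat_diff)
  then show ?thesis
    using \<open>2 \<le> l\<close> by (simp add: l_def field_simps)
qed

text \<open>A point lies in a fraction \<open>a\<close>, and a pair of distinct points in a fraction \<open>b\<close>,
  of the \<open>m\<close>-subsets of \<open>L\<close>.\<close>
lemma average_over_subsets:
  fixes L :: "'a set" and r :: "'a \<Rightarrow> real" and g :: "'a \<Rightarrow> 'a \<Rightarrow> real"
  assumes "finite L" and "m \<le> card L"
    and H: "\<And>T. T \<subseteq> L \<Longrightarrow> card T = m \<Longrightarrow> Z \<le> (\<Sum>i\<in>T. r i) + (\<Sum>i\<in>T. \<Sum>j\<in>T. g i j)"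
  defines "a \<equiv> real m / real (card L)"
    and "b \<equiv> real m * (real m - 1) / (real (card L) * (real (card L) - 1))"
  shows "Z \<le> a * (\<Sum>i\<in>L. r i) + (a - b) * (\<Sum>i\<in>L. g i i) + b * (\<Sum>i\<in>L. \<Sum>j\<in>L. g i j)"
proof -
  define F where "F = {T. T \<subseteq> L \<and> card T = m}"
  define N where "N = real (card L choose m)"
  have "finite F"
    using assms(1) by (simp add: F_def)
  have "N > 0"
    using assms(2) by (simp add: N_def)
  have point: "real (card {T\<in>F. i \<in> T}) = a * N" if "i \<in> L" for i
    using card_subsets_containing_point[OF assms(1) that, of m]
    by (simp add: F_def a_def N_def conj_assoc)
  have pair: "real (card {T\<in>F. i \<in> T \<and> j \<in> T}) = b * N" if "i \<in> L" "j \<in> L" "i \<noteq> j" for i j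
    using card_subsets_containing_pair[OF assms(1) that, of m]
    by (simp add: F_def b_def N_def conj_assoc)
  have "(\<Sum>T\<in>F. Z) \<le> (\<Sum>T\<in>F. (\<Sum>i\<in>T. r i) + (\<Sum>i\<in>T. \<Sum>j\<in>T. g i j))"
    by (rule sum_mono) (auto simp: F_def intro!: H)
  also have "\<dots> = (\<Sum>T\<in>F. \<Sum>i\<in>T. r i) + (\<Sum>T\<in>F. \<Sum>p\<in>T \<times> T. case_prod g p)"
    by (simp add: sum.distrib sum.cartesian_product)
  also have "(\<Sum>T\<in>F. \<Sum>i\<in>T. r i) = (\<Sum>i\<in>L. r i * real (card {T\<in>F. i \<in> T}))"
    by (rule sum_sum_double_counting[OF \<open>finite F\<close> assms(1)]) (auto simp: F_def)
  also have "\<dots> = a * N * (\<Sum>i\<in>L. r i)"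
    by (simp add: point sum_distrib_left mult_ac)
  also have "(\<Sum>T\<in>F. \<Sum>p\<in>T \<times> T. case_prod g p)
      = (\<Sum>p\<in>L \<times> L. case_prod g p * real (card {T\<in>F. p \<in> T \<times> T}))"
    by (rule sum_sum_double_counting[OF \<open>finite F\<close>]) (auto simp: F_def assms(1))
  also have "\<dots> = (\<Sum>p\<in>L \<times> L. case_prod (\<lambda>i j. g i j * (if i = j then a * N else b * N)) p)"
    by (intro sum.cong refl) (clarsimp simp: point pair)
  also have "\<dots> = (\<Sum>i\<in>L. \<Sum>j\<in>L. b * N * g i j + (if i = j then (a - b) * N * g i j else 0))"
    unfolding sum.cartesian_product by (intro sum.cong refl) (clarsimp simp: algebra_simps)
  also have "\<dots> = b * N * (\<Sum>i\<in>L. \<Sum>j\<in>L. g i j) + (a - b) * N * (\<Sum>i\<in>L. g i i)"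
    by (simp add: sum.distrib sum_distrib_left assms(1))
  finally have "N * Z \<le> N * (a * (\<Sum>i\<in>L. r i) + (a - b) * (\<Sum>i\<in>L. g i i) + b * (\<Sum>i\<in>L. \<Sum>j\<in>L. g i j))"
    using n_subsets[OF assms(1), of m] by (simp add: F_def N_def algebra_simps)
  then show ?thesis
    using \<open>N > 0\<close> by simp
qed

section \<open>The norm of the negative part\<close>

lemma card_diag_squared_le_ge:
  fixes A :: "real^'n^'n"
  assumes "0 < t" and "norm A \<le> 1"
  shows "CARD('n) - 1 / t \<le> card {i. (A$i$i)\<^sup>2 \<le> t}"
proof -
  have "t * card {i. t < (A$i$i)\<^sup>2} = (\<Sum>i\<in>{i. t < (A$i$i)\<^sup>2}. t)"
    by simp
  also have "\<dots> \<le> (\<Sum>i\<in>{i. t < (A$i$i)\<^sup>2}. (A$i$i)\<^sup>2)"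
    by (rule sum_mono) simp
  also have "\<dots> \<le> (\<Sum>i\<in>UNIV. (A$i$i)\<^sup>2)"
    by (rule sum_mono2) auto
  also have "\<dots> \<le> (\<Sum>i\<in>UNIV. \<Sum>j\<in>UNIV. (A$i$j)\<^sup>2)"
    by (intro sum_mono member_le_sum) auto
  also have "\<dots> \<le> 1"
    using assms(2) by (simp add: norm_matrix_squared[symmetric] power_le_one)
  also have "{i. t < (A$i$i)\<^sup>2} = - {i. (A$i$i)\<^sup>2 \<le> t}"
    by auto
  finally have "t * (CARD('n) - card {i. (A$i$i)\<^sup>2 \<le> t}) \<le> 1"
    by (simp add: card_Compl)
  moreover have "card {i. (A$i$i)\<^sup>2 \<le> t} \<le> CARD('n)"
    by (rule card_mono) auto
  ultimately show ?thesis
    using assms(1) by (simp add: of_nat_diff field_simps)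
qed

lemma pair_fraction_le_square:
  assumes "m \<le> l" and "2 \<le> l"
  shows "real m * (real m - 1) / (real l * (real l - 1)) \<le> (real m / real l)\<^sup>2"
proof -
  have "real m * real l \<le> real l * real l"
    using assms(1) by (intro mult_right_mono) auto
  then have "real m * (real m * real l) \<le> real m * (real l * real l)"
    by (intro mult_left_mono) auto
  then have "real m * (real m - 1) * (real l * real l) \<le> real m * real m * (real l * (real l - 1))"
    by (simp add: algebra_simps)
  moreover have "0 < real l * (real l - 1)" "0 < real l * real l"
    using assms(2) by auto
  ultimately show ?thesis
    unfolding power2_eq_square times_divide_times_eq
    by (metis pos_divide_le_eq pos_le_divide_eq times_divide_eq_left)
qed

lemma bound_from_quadratic_inequality:
  fixes q a r :: real
  assumes "0 \<le> q" "0 \<le> a" "a \<le> 4/3 * r" "r \<le> 1/4" "a \<le> 1/3" "0 \<le> r"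
    and H: "q\<^sup>2 \<le> 2 * a * q\<^sup>2 + 2 * a * sqrt r * q + a\<^sup>2 * q"
  shows "q \<le> 96 * r * sqrt r"
proof (cases "q = 0")
  case True
  then show ?thesis using assms by simp
next
  case False
  then have "0 < q" using assms(1) by simp
  define s where "s = sqrt r"
  have "0 \<le> s" "s * s = r"
    using assms(6) by (auto simp: s_def)
  have "s \<le> 1/2"
    unfolding s_def using assms(4)
    by (metis real_sqrt_four real_sqrt_le_iff real_sqrt_divide real_sqrt_one)
  have "q * q \<le> q * (2 * a * q + 2 * a * s + a\<^sup>2)"
    using H by (simp add: s_def power2_eq_square algebra_simps)
  then have "q \<le> 2 * a * q + 2 * a * s + a\<^sup>2"
    using \<open>0 < q\<close> by simp
  moreover have "(1/3) * q \<le> (1 - 2 * a) * q"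
    using assms(5) \<open>0 < q\<close> by (intro mult_right_mono) auto
  ultimately have "q \<le> 6 * (a * s) + 3 * a\<^sup>2"
    by (simp add: algebra_simps)
  moreover have "a * s \<le> (4/3 * r) * s"
    using assms(3) \<open>0 \<le> s\<close> by (rule mult_right_mono)
  moreover have "a\<^sup>2 \<le> (4/3 * r)\<^sup>2"
    using power_mono[OF assms(3,2)] .
  moreover have "r\<^sup>2 \<le> (r * s) * (1/2)"
    using \<open>s * s = r\<close> \<open>s \<le> 1/2\<close> \<open>0 \<le> s\<close> assms(6)
    by (metis mult_left_mono mult.assoc power2_eq_square zero_le_mult_iff)
  moreover have "0 \<le> r * s"
    using assms(6) \<open>0 \<le> s\<close> by simp
  ultimately have "q \<le> 96 * r * s"
    by (simp add: power2_eq_square algebra_simps)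
  then show ?thesis
    by (simp add: s_def)
qed

context moreau_split
begin

lemma sum_diag_le:
  assumes "principal_psd M (-T)" and "0 \<le> \<tau>" and "\<And>i. i \<in> L \<Longrightarrow> P$i$i \<le> \<tau>"
  shows "(\<Sum>i\<in>L. P$i$i * Q$i$i) \<le> \<tau> * sqrt (card T) * norm Q"
proof -
  have "(\<Sum>i\<in>L. P$i$i * Q$i$i) \<le> (\<Sum>i\<in>L. \<tau> * Q$i$i)"
    using assms(3) psd_cone_diag_nonneg[OF Q_psd] by (intro sum_mono mult_right_mono) auto
  also have "\<dots> \<le> \<tau> * trace Q"
    unfolding trace_def sum_distrib_left
    using assms(2) psd_cone_diag_nonneg[OF Q_psd] by (intro sum_mono2) auto
  also have "\<dots> \<le> \<tau> * (sqrt (card T) * norm Q)"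
    using trace_Q_le[OF assms(1)] assms(2) by (rule mult_left_mono)
  finally show ?thesis
    by (simp add: mult.assoc)
qed

lemma norm_Q_squared_le_average:
  assumes pp: "\<And>T. card T = m \<Longrightarrow> principal_psd M (-T)"
    and L: "m \<le> card L" "2 \<le> card L" and "norm P \<le> 1"
    and "0 \<le> \<tau>" and "\<And>i. i \<in> L \<Longrightarrow> P$i$i \<le> \<tau>"
  defines "a \<equiv> real m / real (card L)"
  shows "(norm Q)\<^sup>2 \<le> 2 * a * (norm Q)\<^sup>2 + a * \<tau> * sqrt m * norm Q + a\<^sup>2 * norm Q"
proof -
  define b where "b = real m * (real m - 1) / (real (card L) * (real (card L) - 1))"
  define R where "R = (\<Sum>i\<in>L. 2 * (\<Sum>j\<in>UNIV. (Q$i$j)\<^sup>2))"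
  define D where "D = (\<Sum>i\<in>L. P$i$i * Q$i$i)"
  define G where "G = (\<Sum>i\<in>L. \<Sum>j\<in>L. P$i$j * Q$i$j)"
  have avg: "(norm Q)\<^sup>2 \<le> a * R + (a - b) * D + b * G"
    unfolding a_def b_def R_def D_def G_def
  proof (rule average_over_subsets[OF _ L(1)])
    show "(norm Q)\<^sup>2 \<le> (\<Sum>i\<in>T. 2 * (\<Sum>j\<in>UNIV. (Q$i$j)\<^sup>2)) + (\<Sum>i\<in>T. \<Sum>j\<in>T. P$i$j * Q$i$j)"
      if "card T = m" for T
      using norm_Q_squared_le[OF pp[OF that]] by (simp add: sum_distrib_left)
  qed simp
  have "0 \<le> a" "b \<le> a\<^sup>2"
    using pair_fraction_le_square[OF L] by (simp_all add: a_def b_def)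
  have "0 \<le> b"
    unfolding b_def using L(2) by (cases m) auto
  have "R \<le> 2 * (norm Q)\<^sup>2"
    unfolding R_def norm_matrix_squared sum_distrib_left[symmetric]
    by (intro mult_left_mono sum_mono2) (auto intro: sum_nonneg)
  have "0 \<le> D"
    unfolding D_def using psd_cone_diag_nonneg[OF P_psd] psd_cone_diag_nonneg[OF Q_psd]
    by (intro sum_nonneg mult_nonneg_nonneg)
  obtain T :: "'n set" where "card T = m"
    using obtain_subset_with_card_n[of m "UNIV :: 'n set"] L card_mono[of UNIV L] by force
  then have "D \<le> \<tau> * sqrt m * norm Q"
    unfolding D_def using sum_diag_le[OF pp assms(5,6)] by simp
  have "G \<le> norm Q"
    using sum_block_le_norm_mult_norm[where I = L and A = P and B = Q] \<open>norm P \<le> 1\<close>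
      mult_right_mono[OF \<open>norm P \<le> 1\<close> norm_ge_zero[of Q]]
    by (simp add: G_def)
  have "a * R \<le> 2 * a * (norm Q)\<^sup>2"
    using mult_left_mono[OF \<open>R \<le> 2 * (norm Q)\<^sup>2\<close> \<open>0 \<le> a\<close>] by simp
  moreover have "(a - b) * D \<le> a * \<tau> * sqrt m * norm Q"
    using mult_left_mono[OF \<open>D \<le> \<tau> * sqrt m * norm Q\<close> \<open>0 \<le> a\<close>] mult_left_mono[OF \<open>0 \<le> D\<close> \<open>0 \<le> b\<close>]
    by (simp add: algebra_simps)
  moreover have "b * G \<le> a\<^sup>2 * norm Q"
    using mult_left_mono[OF \<open>G \<le> norm Q\<close> \<open>0 \<le> b\<close>] mult_right_mono[OF \<open>b \<le> a\<^sup>2\<close> norm_ge_zero[of Q]]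
    by linarith
  ultimately show ?thesis
    using avg by linarith
qed

lemma norm_Q_le:
  assumes "3 \<le> CARD('n)" and "4 * m \<le> CARD('n)" and "norm M \<le> 1"
    and pp: "\<And>T. card T = m \<Longrightarrow> principal_psd M (-T)"
  shows "norm Q \<le> 96 * (real m / real CARD('n)) * sqrt (real m / real CARD('n))"
proof -
  define n where "n = real CARD('n)"
  define L where "L = {i. (P$i$i)\<^sup>2 \<le> 4 / n}"
  define a where "a = real m / real (card L)"
  have "0 < n" by (simp add: n_def)
  have "norm P \<le> 1"
    using norm_P_le assms(3) by linarith
  then have L: "3 / 4 * n \<le> card L"
    using card_diag_squared_le_ge[of "4 / n" P] \<open>0 < n\<close> by (simp add: L_def n_def)
  then have "m \<le> card L" "2 \<le> card L"
    using assms(1,2) by (simp_all add: n_def)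
  have diag: "P$i$i \<le> 2 / sqrt n" if "i \<in> L" for i
    using that psd_cone_diag_nonneg[OF P_psd, of i] real_sqrt_le_mono[of "(P$i$i)\<^sup>2" "4 / n"]
    by (simp add: L_def real_sqrt_divide)
  have "0 \<le> 2 / sqrt n"
    using \<open>0 < n\<close> by simp
  have "a * (2 / sqrt n) * sqrt m = 2 * a * sqrt (m / n)"
    by (simp add: real_sqrt_divide)
  then have "(norm Q)\<^sup>2 \<le> 2 * a * (norm Q)\<^sup>2 + 2 * a * sqrt (m / n) * norm Q + a\<^sup>2 * norm Q"
    using norm_Q_squared_le_average[OF pp \<open>m \<le> card L\<close> \<open>2 \<le> card L\<close> \<open>norm P \<le> 1\<close>
        \<open>0 \<le> 2 / sqrt n\<close> diag]
    by (simp add: a_def)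
  moreover have "a \<le> m / (3 / 4 * n)"
    unfolding a_def using L \<open>0 < n\<close> by (intro divide_left_mono) auto
  then have a: "a \<le> 4/3 * (m / n)"
    using \<open>0 < n\<close> by (simp add: field_simps)
  moreover have r: "m / n \<le> 1/4"
    using assms(2) by (simp add: n_def field_simps)
  moreover have "a \<le> 1/3"
    using a r by linarith
  ultimately show ?thesis
    using bound_from_quadratic_inequality[of "norm Q" a "m / n"] by (simp add: a_def n_def)
qed

end

lemma powr_three_halves: "0 \<le> r \<Longrightarrow> r powr (3/2) = r * sqrt (r::real)"
  by (cases "r = 0") (simp_all add: powr_add[of r 1 "1/2", simplified] powr_half_sqrt)

lemma dist_F_psd_le:
  fixes M :: "real^'n^'n"
  assumes "M \<in> k_psd_closure k" and "norm M \<le> 1" and "3 \<le> CARD('n)"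
    and "3 * real CARD('n) / 4 \<le> real k" and "k \<le> CARD('n)"
  shows "dist_F_psd M \<le> 96 * ((real CARD('n) - real k) / real CARD('n)) powr (3/2)"
proof -
  define r where "r = (real CARD('n) - real k) / real CARD('n)"
  have "transpose M = M"
    using assms(1) by (simp add: k_psd_closure_def symmetric_mat_def)
  then obtain P Q where split: "moreau_split M P Q" and dist: "dist_F_psd M \<le> norm Q"
    by (rule moreau_split_exists)
  interpret moreau_split M P Q
    by (rule split)
  have "principal_psd M (-T)" if "card T = CARD('n) - k" for T :: "'n set"
    using assms(1,5) that by (simp add: k_psd_closure_def card_Compl)
  then have "norm Q \<le> 96 * r * sqrt r"
    using norm_Q_le[of "CARD('n) - k"] assms(2-5) by (simp add: r_def of_nat_diff)
  moreover have "0 \<le> r"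
    using assms(5) by (simp add: r_def)
  ultimately show ?thesis
    using dist by (simp add: r_def[symmetric] powr_three_halves)
qed

text \<open>The supremum of the empty set of reals is unspecified, hence the first hypothesis.\<close>
lemma dist_F_bar_le:
  assumes "\<exists>M\<in>K. frob_norm M = 1"
    and "\<And>M. M \<in> K \<Longrightarrow> frob_norm M = 1 \<Longrightarrow> dist_F_psd M \<le> c"
  shows "dist_F_bar K \<le> c"
  unfolding dist_F_bar_def by (rule cSUP_least) (use assms in auto)

theorem theorem2:
  fixes k :: nat
  assumes "CARD('n::finite) \<ge> 97"
    and "3 * real CARD('n) / 4 \<le> real k" and "k \<le> CARD('n)"
  shows "dist_F_bar (k_psd_closure k :: (real^'n^'n) set)
           \<le> 96 * ((real CARD('n) - real k) / real CARD('n)) powr (3/2)"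
proof (rule dist_F_bar_le)
  have "outer_prod (axis i 1) (axis i 1) \<in> k_psd_closure k" for i :: 'n
    using psd_cone_subset_k_psd_closure outer_prod_in_psd_cone by blast
  moreover have "frob_norm (outer_prod (axis i 1) (axis i 1) :: real^'n^'n) = 1" for i :: 'n
    by (simp add: frob_norm_eq_norm norm_outer_prod_self)
  ultimately show "\<exists>M \<in> k_psd_closure k :: (real^'n^'n) set. frob_norm M = 1"
    by blast
  show "dist_F_psd M \<le> 96 * ((real CARD('n) - real k) / real CARD('n)) powr (3/2)"
    if "M \<in> k_psd_closure k" and "frob_norm M = 1" for M :: "real^'n^'n"
    using dist_F_psd_le[OF that(1)] that(2) assms by (simp add: frob_norm_eq_norm)
qed

end
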